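(* Let $\varepsilon$ be a locally variational source form on $\mathbb{R}\times T^2M$. Then the local expressions $$\omega=\tfrac12\,D(x,y,0,0)\,dx\wedge dy$$ and $$\kappa=-\Big(\int_0^{\dot x}B_{xx}(x,y,\nu,\dot y)\,d\nu+\int_0^{\dot y}B_{xy}(x,y,0,\sigma)\,d\sigma\Big)dx-\Big(\int_0^{\dot x}B_{xy}(x,y,\nu,\dot y)\,d\nu+\int_0^{\dot y}B_{yy}(x,y,0,\sigma)\,d\sigma\Big)dy,$$ defined in each chart, are independent of the chart, i.e. they define a global $2$-form $\omega$ on $M$ (hence on $T^1M$) and a global $1$-form $\kappa$ on $T^1M$. Consequently $\alpha'-\omega=d\kappa$ holds globally on $T^1M$, where $\alpha'=\tfrac12 D\,dx\wedge dy+(B_{xx}dx+B_{xy}dy)\wedge d\dot x+(B_{xy}dx+B_{yy}dy)\wedge d\dot y$.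
   Context: Setting: $M$ is a smooth connected $2$-manifold, $Y=\mathbb{R}\times M$; $J^{1}Y\cong\mathbb{R}\times T^{1}M$, $J^{2}Y\cong\mathbb{R}\times T^{2}M$, with chart coordinates $(t,x,y,\dot x,\dot y)$, $(t,x,y,\dot x,\dot y,\ddot x,\ddot y)$ induced by charts $(x,y)$ on $M$ (tangent coordinates $\dot x,\dot y$ transform linearly under chart changes). Contact forms $\omega^x=dx-\dot x dt$, $\omega^y=dy-\dot y dt$. A source form $\varepsilon=(\varepsilon_x\omega^x+\varepsilon_y\omega^y)\wedge dt$ on $\mathbb{R}\times T^2M$ is locally variational iff locally it is the Euler–Lagrange form of a first-order Lagrangian; equivalently in every chart $\varepsilon_x=A_x+B_{xx}\ddot x+B_{xy}\ddot y$, $\varepsilon_y=A_y+B_{xy}\ddot x+B_{yy}\ddot y$ with $A_x,A_y,B_{xx},B_{xy},B_{yy}$ functions of $(x,y,\dot x,\dot y)$ satisfying the Helmholtz conditions: $\partial B_{xx}/\partial\dot y=\partial B_{xy}/\partial\dot x$, $\partial B_{yy}/\partial\dot x=\partial B_{xy}/\partial\dot y$, $\partial A_x/\partial\dot x-\dot x\,\partial B_{xx}/\partial x-\dot y\,\partial B_{xx}/\partial y=0$, $\partial A_y/\partial\dot y-\dot x\,\partial B_{yy}/\partial x-\dot y\,\partial B_{yy}/\partial y=0$, $\partial A_x/\partial\dot y+\partial A_y/\partial\dot x-2\dot x\,\partial B_{xy}/\partial x-2\dot y\,\partial B_{xy}/\partial y=0$, $\partial A_x/\partial y-\partial A_y/\partial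 x-\frac12\dot x\,\partial_x D-\frac12\dot y\,\partial_y D=0$, where $D=\partial A_x/\partial\dot y-\partial A_y/\partial\dot x$. *)

theory Defs
  imports "HOL-Analysis.Analysis"
begin

fun Ck_on :: "nat \<Rightarrow> 'a::euclidean_space set \<Rightarrow> ('a \<Rightarrow> real) \<Rightarrow> bool" where
  "Ck_on 0 S f = continuous_on S f"
| "Ck_on (Suc k) S f =
     ((\<forall>p\<in>S. f differentiable (at p)) \<and>
      (\<forall>w. Ck_on k S (\<lambda>p. frechet_derivative f (at p) w)))"

definition smooth_on :: "'a::euclidean_space set \<Rightarrow> ('a \<Rightarrow> real) \<Rightarrow> bool" where
  "smooth_on S f \<longleftrightarrow> (\<forall>k. Ck_on k S f)"

text \<open>Functions of chart coordinates (x,y) on an open chart domain U,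
  and functions of tangent-bundle coordinates (x,y,xdot,ydot) on U x R^2.\<close>

definition smooth2 :: "(real \<times> real) set \<Rightarrow> (real \<Rightarrow> real \<Rightarrow> real) \<Rightarrow> bool" where
  "smooth2 U f \<longleftrightarrow> smooth_on U (\<lambda>(x, y). f x y)"

definition smooth4 :: "(real \<times> real) set \<Rightarrow> (real \<Rightarrow> real \<Rightarrow> real \<Rightarrow> real \<Rightarrow> real) \<Rightarrow> bool" where
  "smooth4 U f \<longleftrightarrow> smooth_on (U \<times> UNIV) (\<lambda>((x, y), (u, v)). f x y u v)"

definition px :: "(real \<Rightarrow> real \<Rightarrow> real) \<Rightarrow> real \<Rightarrow> real \<Rightarrow> real" where
  "px f x y = deriv (\<lambda>s. f s y) x"
definition py :: "(real \<Rightarrow> real \<Rightarrow> real) \<Rightarrow> real \<Rightarrow> real \<Rightarrow> real" where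
  "py f x y = deriv (\<lambda>s. f x s) y"

definition d1 :: "(real \<Rightarrow> real \<Rightarrow> real \<Rightarrow> real \<Rightarrow> real) \<Rightarrow> real \<Rightarrow> real \<Rightarrow> real \<Rightarrow> real \<Rightarrow> real" where
  "d1 f x y u v = deriv (\<lambda>s. f s y u v) x"
definition d2 :: "(real \<Rightarrow> real \<Rightarrow> real \<Rightarrow> real \<Rightarrow> real) \<Rightarrow> real \<Rightarrow> real \<Rightarrow> real \<Rightarrow> real \<Rightarrow> real" where
  "d2 f x y u v = deriv (\<lambda>s. f x s u v) y"
definition d3 :: "(real \<Rightarrow> real \<Rightarrow> real \<Rightarrow> real \<Rightarrow> real) \<Rightarrow> real \<Rightarrow> real \<Rightarrow> real \<Rightarrow> real \<Rightarrow> real" where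
  "d3 f x y u v = deriv (\<lambda>s. f x y s v) u"
definition d4 :: "(real \<Rightarrow> real \<Rightarrow> real \<Rightarrow> real \<Rightarrow> real) \<Rightarrow> real \<Rightarrow> real \<Rightarrow> real \<Rightarrow> real \<Rightarrow> real" where
  "d4 f x y u v = deriv (\<lambda>s. f x y u s) v"

definition oint :: "real \<Rightarrow> real \<Rightarrow> (real \<Rightarrow> real) \<Rightarrow> real" where
  "oint a b f = (if a \<le> b then integral {a..b} f else - integral {b..a} f)"

definition Dfun :: "(real \<Rightarrow> real \<Rightarrow> real \<Rightarrow> real \<Rightarrow> real) \<Rightarrow> (real \<Rightarrow> real \<Rightarrow> real \<Rightarrow> real \<Rightarrow> real)
                    \<Rightarrow> real \<Rightarrow> real \<Rightarrow> real \<Rightarrow> real \<Rightarrow> real" where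
  "Dfun Ax Ay x y u v = d4 Ax x y u v - d3 Ay x y u v"

definition helmholtz ::
  "(real \<times> real) set \<Rightarrow> (real \<Rightarrow> real \<Rightarrow> real \<Rightarrow> real \<Rightarrow> real) \<Rightarrow> (real \<Rightarrow> real \<Rightarrow> real \<Rightarrow> real \<Rightarrow> real)
   \<Rightarrow> (real \<Rightarrow> real \<Rightarrow> real \<Rightarrow> real \<Rightarrow> real) \<Rightarrow> (real \<Rightarrow> real \<Rightarrow> real \<Rightarrow> real \<Rightarrow> real)
   \<Rightarrow> (real \<Rightarrow> real \<Rightarrow> real \<Rightarrow> real \<Rightarrow> real) \<Rightarrow> bool" where
  "helmholtz U Ax Ay Bxx Bxy Byy \<longleftrightarrow>
     smooth4 U Ax \<and> smooth4 U Ay \<and> smooth4 U Bxx \<and> smooth4 U Bxy \<and> smooth4 U Byy \<and>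
     (\<forall>x y u v. (x, y) \<in> U \<longrightarrow>
        d4 Bxx x y u v = d3 Bxy x y u v \<and>
        d3 Byy x y u v = d4 Bxy x y u v \<and>
        d3 Ax x y u v - u * d1 Bxx x y u v - v * d2 Bxx x y u v = 0 \<and>
        d4 Ay x y u v - u * d1 Byy x y u v - v * d2 Byy x y u v = 0 \<and>
        d4 Ax x y u v + d3 Ay x y u v - 2 * u * d1 Bxy x y u v - 2 * v * d2 Bxy x y u v = 0 \<and>
        d2 Ax x y u v - d1 Ay x y u v
          - u / 2 * d1 (Dfun Ax Ay) x y u v - v / 2 * d2 (Dfun Ax Ay) x y u v = 0)"

text \<open>Components of the source form: eps_x = A_x + B_xx xddot + B_xy yddot, etc.
  Arguments: x y xdot ydot xddot yddot.\<close>
definition eps_x :: "(real \<Rightarrow> real \<Rightarrow> real \<Rightarrow> real \<Rightarrow> real) \<Rightarrow> (real \<Rightarrow> real \<Rightarrow> real \<Rightarrow> real \<Rightarrow> real)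
   \<Rightarrow> (real \<Rightarrow> real \<Rightarrow> real \<Rightarrow> real \<Rightarrow> real) \<Rightarrow> real \<Rightarrow> real \<Rightarrow> real \<Rightarrow> real \<Rightarrow> real \<Rightarrow> real \<Rightarrow> real" where
  "eps_x Ax Bxx Bxy x y u v a b = Ax x y u v + Bxx x y u v * a + Bxy x y u v * b"

definition eps_y :: "(real \<Rightarrow> real \<Rightarrow> real \<Rightarrow> real \<Rightarrow> real) \<Rightarrow> (real \<Rightarrow> real \<Rightarrow> real \<Rightarrow> real \<Rightarrow> real)
   \<Rightarrow> (real \<Rightarrow> real \<Rightarrow> real \<Rightarrow> real \<Rightarrow> real) \<Rightarrow> real \<Rightarrow> real \<Rightarrow> real \<Rightarrow> real \<Rightarrow> real \<Rightarrow> real \<Rightarrow> real" where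
  "eps_y Ay Bxy Byy x y u v a b = Ay x y u v + Bxy x y u v * a + Byy x y u v * b"

text \<open>omega = omega_coef dx /\ dy, omega_coef = D(x,y,0,0)/2\<close>
definition omega_coef :: "(real \<Rightarrow> real \<Rightarrow> real \<Rightarrow> real \<Rightarrow> real) \<Rightarrow> (real \<Rightarrow> real \<Rightarrow> real \<Rightarrow> real \<Rightarrow> real)
   \<Rightarrow> real \<Rightarrow> real \<Rightarrow> real" where
  "omega_coef Ax Ay x y = Dfun Ax Ay x y 0 0 / 2"

text \<open>kappa = kappa_x dx + kappa_y dy\<close>
definition kappa_x :: "(real \<Rightarrow> real \<Rightarrow> real \<Rightarrow> real \<Rightarrow> real) \<Rightarrow> (real \<Rightarrow> real \<Rightarrow> real \<Rightarrow> real \<Rightarrow> real)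
   \<Rightarrow> real \<Rightarrow> real \<Rightarrow> real \<Rightarrow> real \<Rightarrow> real" where
  "kappa_x Bxx Bxy x y u v =
     - (oint 0 u (\<lambda>\<nu>. Bxx x y \<nu> v) + oint 0 v (\<lambda>\<sigma>. Bxy x y 0 \<sigma>))"

definition kappa_y :: "(real \<Rightarrow> real \<Rightarrow> real \<Rightarrow> real \<Rightarrow> real) \<Rightarrow> (real \<Rightarrow> real \<Rightarrow> real \<Rightarrow> real \<Rightarrow> real)
   \<Rightarrow> real \<Rightarrow> real \<Rightarrow> real \<Rightarrow> real \<Rightarrow> real" where
  "kappa_y Bxy Byy x y u v =
     - (oint 0 u (\<lambda>\<nu>. Bxy x y \<nu> v) + oint 0 v (\<lambda>\<sigma>. Byy x y 0 \<sigma>))"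

definition diffeo2 :: "(real \<times> real) set \<Rightarrow> (real \<times> real) set \<Rightarrow> (real \<Rightarrow> real \<Rightarrow> real) \<Rightarrow> (real \<Rightarrow> real \<Rightarrow> real)
   \<Rightarrow> (real \<Rightarrow> real \<Rightarrow> real) \<Rightarrow> (real \<Rightarrow> real \<Rightarrow> real) \<Rightarrow> bool" where
  "diffeo2 U V p1 p2 q1 q2 \<longleftrightarrow>
     open U \<and> open V \<and> smooth2 U p1 \<and> smooth2 U p2 \<and> smooth2 V q1 \<and> smooth2 V q2 \<and>
     (\<forall>x y. (x, y) \<in> U \<longrightarrow> (p1 x y, p2 x y) \<in> V \<and> q1 (p1 x y) (p2 x y) = x \<and> q2 (p1 x y) (p2 x y) = y) \<and>
     (\<forall>x y. (x, y) \<in> V \<longrightarrow> (q1 x y, q2 x y) \<in> U \<and> p1 (q1 x y) (q2 x y) = x \<and> p2 (q1 x y) (q2 x y) = y)"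

definition vel :: "(real \<Rightarrow> real \<Rightarrow> real) \<Rightarrow> real \<Rightarrow> real \<Rightarrow> real \<Rightarrow> real \<Rightarrow> real" where
  "vel p x y u v = px p x y * u + py p x y * v"

definition acc :: "(real \<Rightarrow> real \<Rightarrow> real) \<Rightarrow> real \<Rightarrow> real \<Rightarrow> real \<Rightarrow> real \<Rightarrow> real \<Rightarrow> real \<Rightarrow> real" where
  "acc p x y u v a b = px p x y * a + py p x y * b
     + px (px p) x y * u * u + (px (py p) x y + py (px p) x y) * u * v + py (py p) x y * v * v"

end

theory Submission
  imports Defs
begin

text \<open>
  On each fibre of the tangent bundle, kappa is minus the potential, vanishing at the zero
  velocity, of the pair (B_xx, B_xy) resp. (B_xy, B_yy); these pairs are closed 1-forms on the
  fibre by the first two Helmholtz conditions. Comparing coefficients of the accelerations shows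
  that the B's transform as a symmetric bilinear form, so the transformed pairs are pullbacks of
  the primed closed forms under the linear map of the fibres, and uniqueness of potentials
  vanishing at 0 makes kappa transform as a 1-form. Along velocity lines through 0 the induced
  accelerations are quadratic, so differentiating the transformation law of the A's at zero
  velocity yields D(x,y,0,0) times the Jacobian determinant. Finally, the vertical derivatives of
  kappa return the B's, and its horizontal curl is the integral of the derivative of D/2 along the
  broken path from 0 to (xdot, ydot); by the remaining Helmholtz conditions and symmetry of
  second derivatives this derivative is expressed through the B's.
\<close>

section \<open>Oriented integrals\<close>

lemma oint_fundamental_theorem:
  fixes G g :: "real \<Rightarrow> real"
  assumes "\<And>t. t \<in> {min a b..max a b} \<Longrightarrow>
      (G has_real_derivative g t) (at t within {min a b..max a b})"
  shows "oint a b g = G b - G a"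
proof (cases "a \<le> b")
  case True
  then have "(g has_integral (G b - G a)) {a..b}"
    using assms by (intro fundamental_theorem_of_calculus)
      (auto simp: has_real_derivative_iff_has_vector_derivative[symmetric] min_def max_def)
  then show ?thesis using True by (simp add: oint_def integral_unique)
next
  case False
  then have "(g has_integral (G a - G b)) {b..a}"
    using assms by (intro fundamental_theorem_of_calculus)
      (auto simp: has_real_derivative_iff_has_vector_derivative[symmetric] min_def max_def)
  then show ?thesis using False by (simp add: oint_def integral_unique)
qed

lemma oint_has_real_derivative:
  fixes g :: "real \<Rightarrow> real"
  assumes "continuous_on {lo..hi} g" "a \<in> {lo..hi}" "s \<in> {lo<..<hi}"
  shows "((\<lambda>t. oint a t g) has_real_derivative g s) (at s)"
proof -
  obtain G where G: "\<And>t. t \<in> {lo..hi} \<Longrightarrow> (G has_real_derivative g t) (at t within {lo..hi})"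
    using antiderivative_continuous[OF assms(1)]
    by (auto simp: has_real_derivative_iff_has_vector_derivative)
  have "oint a t g = G t - G a" if "t \<in> {lo<..<hi}" for t
  proof (rule oint_fundamental_theorem)
    fix \<tau> assume "\<tau> \<in> {min a t..max a t}"
    moreover have "{min a t..max a t} \<subseteq> {lo..hi}" using that assms(2) by auto
    ultimately show "(G has_real_derivative g \<tau>) (at \<tau> within {min a t..max a t})"
      using G has_field_derivative_subset by blast
  qed
  moreover have "(G has_real_derivative g s) (at s)"
    using G[of s] assms(3) by (simp add: at_within_Icc_at)
  then have "((\<lambda>t. G t - G a) has_real_derivative g s) (at s)"
    by (auto intro!: derivative_eq_intros)
  ultimately show ?thesis
    using has_field_derivative_transform_within_open[where S="{lo<..<hi}"] assms(3) by simp
qed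

lemma oint_has_real_derivative_UNIV:
  fixes g :: "real \<Rightarrow> real"
  assumes "continuous_on UNIV g"
  shows "((\<lambda>t. oint a t g) has_real_derivative g s) (at s)"
  using continuous_on_subset[OF assms]
  by (intro oint_has_real_derivative[where lo="min a s - 1" and hi="max a s + 1"]) auto

lemma oint_has_real_derivative_parameter:
  fixes f f' :: "real \<Rightarrow> real \<Rightarrow> real"
  assumes "r > 0"
    and "\<And>x t. x \<in> ball x0 r \<Longrightarrow> t \<in> {min a b..max a b} \<Longrightarrow>
      ((\<lambda>x. f x t) has_real_derivative f' x t) (at x)"
    and "\<And>x. x \<in> ball x0 r \<Longrightarrow> continuous_on {min a b..max a b} (f x)"
    and "continuous_on (ball x0 r \<times> {min a b..max a b}) (\<lambda>(x, t). f' x t)"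
  shows "((\<lambda>x. oint a b (f x)) has_real_derivative oint a b (f' x0)) (at x0)"
proof -
  let ?I = "{min a b..max a b}"
  have "((\<lambda>x. integral (cbox (min a b) (max a b)) (f x)) has_real_derivative
      integral (cbox (min a b) (max a b)) (f' x0)) (at x0 within ball x0 r)"
  proof (rule leibniz_rule_field_derivative)
    fix x t assume "x \<in> ball x0 r" "t \<in> cbox (min a b) (max a b)"
    then show "((\<lambda>x. f x t) has_real_derivative f' x t) (at x within ball x0 r)"
      using assms(2) by (simp add: has_field_derivative_at_within)
  qed (use assms in \<open>auto simp: integrable_continuous_interval\<close>)
  moreover have "at x0 within ball x0 r = at x0"
    using assms(1) by (intro at_within_open) auto
  ultimately have "((\<lambda>x. integral ?I (f x)) has_real_derivative integral ?I (f' x0)) (at x0)"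
    by (simp add: cbox_interval)
  then show ?thesis
    by (cases "a \<le> b") (auto simp: oint_def min_def max_def intro: DERIV_minus)
qed

lemma oint_diff:
  fixes f g :: "real \<Rightarrow> real"
  assumes "continuous_on {min a b..max a b} f" "continuous_on {min a b..max a b} g"
  shows "oint a b (\<lambda>t. f t - g t) = oint a b f - oint a b g"
  using assms
  by (cases "a \<le> b") (simp_all add: oint_def min_def max_def integral_diff integrable_continuous_interval)

section \<open>Smooth functions and symmetry of second derivatives\<close>

lemma Ck_on_cong:
  assumes "open S" "\<And>p. p \<in> S \<Longrightarrow> f p = g p" "Ck_on k S f"
  shows "Ck_on k S g"
  using assms(2,3)
proof (induction k arbitrary: f g)
  case 0
  then show ?case using continuous_on_cong[of S S f g] by simp
next
  case (Suc k)
  have f_diff: "\<forall>p\<in>S. f differentiable (at p)"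
    and f_deriv: "\<And>w. Ck_on k S (\<lambda>p. frechet_derivative f (at p) w)"
    using Suc.prems(2) by auto
  have same_deriv: "frechet_derivative f (at p) = frechet_derivative g (at p)" if "p \<in> S" for p
    using f_diff that Suc.prems(1)
    by (intro frechet_derivative_transform_within_open[OF _ assms(1) that]) auto
  have "g differentiable (at p)" if "p \<in> S" for p
  proof -
    have "(f has_derivative frechet_derivative f (at p)) (at p)"
      using f_diff that frechet_derivative_works by blast
    then have "(g has_derivative frechet_derivative f (at p)) (at p)"
      using has_derivative_transform_within_open assms(1) that Suc.prems(1) by blast
    then show ?thesis by (auto simp: differentiable_def)
  qed
  moreover have "Ck_on k S (\<lambda>p. frechet_derivative g (at p) w)" for w
    using Suc.IH[OF _ f_deriv[of w]] same_deriv by simp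
  ultimately show ?case by simp
qed

lemma smooth_on_cong:
  assumes "open S" "\<And>p. p \<in> S \<Longrightarrow> f p = g p" "smooth_on S f"
  shows "smooth_on S g"
  using assms Ck_on_cong unfolding smooth_on_def by blast

lemma smooth_on_differentiable:
  assumes "smooth_on S f" "p \<in> S"
  shows "f differentiable (at p)"
  using assms Ck_on.simps(2)[of 0 S f] unfolding smooth_on_def by blast

lemma smooth_on_continuous_on:
  assumes "smooth_on S f"
  shows "continuous_on S f"
  using assms Ck_on.simps(1)[of S f] unfolding smooth_on_def by blast

lemma smooth_on_frechet_derivative:
  assumes "smooth_on S f"
  shows "smooth_on S (\<lambda>p. frechet_derivative f (at p) w)"
  using assms Ck_on.simps(2)[of _ S f] unfolding smooth_on_def by blast

lemma has_real_derivative_along_line: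
  fixes G :: "'a::real_normed_vector \<Rightarrow> real"
  assumes "G differentiable (at (c + s *\<^sub>R w))"
  shows "((\<lambda>t. G (c + t *\<^sub>R w)) has_real_derivative frechet_derivative G (at (c + s *\<^sub>R w)) w) (at s)"
proof -
  let ?G' = "frechet_derivative G (at (c + s *\<^sub>R w))"
  have "(G has_derivative ?G') (at (c + s *\<^sub>R w))"
    using assms frechet_derivative_works by blast
  then have "((G \<circ> (\<lambda>t. c + t *\<^sub>R w)) has_derivative (?G' \<circ> (\<lambda>h. h *\<^sub>R w))) (at s)"
    by (intro diff_chain_at) (auto intro!: derivative_eq_intros)
  moreover have "?G' \<circ> (\<lambda>h. h *\<^sub>R w) = (*) (?G' w)"
    using linear_cmul[OF linear_frechet_derivative[OF assms]] by (auto simp: o_def mult.commute)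
  ultimately show ?thesis
    by (simp add: has_field_derivative_def o_def)
qed

text \<open>Differentiate \<open>g s t - g 0 t = \<integral>\<^sub>0\<^sup>s gs \<sigma> t d\<sigma>\<close> in \<open>t\<close> at 0 and then in \<open>s\<close> at 0.\<close>

lemma real_mixed_partials_eq:
  fixes g gs gt gst gts :: "real \<Rightarrow> real \<Rightarrow> real"
  assumes e: "e > 0"
    and gs: "\<And>s t. \<bar>s\<bar> < e \<Longrightarrow> \<bar>t\<bar> < e \<Longrightarrow> ((\<lambda>s. g s t) has_real_derivative gs s t) (at s)"
    and gt: "\<And>s t. \<bar>s\<bar> < e \<Longrightarrow> \<bar>t\<bar> < e \<Longrightarrow> ((\<lambda>t. g s t) has_real_derivative gt s t) (at t)"
    and gst: "\<And>s t. \<bar>s\<bar> < e \<Longrightarrow> \<bar>t\<bar> < e \<Longrightarrow> ((\<lambda>t. gs s t) has_real_derivative gst s t) (at t)"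
    and gts: "\<And>s t. \<bar>s\<bar> < e \<Longrightarrow> \<bar>t\<bar> < e \<Longrightarrow> ((\<lambda>s. gt s t) has_real_derivative gts s t) (at s)"
    and gs_cont: "continuous_on ({-e<..<e} \<times> {-e<..<e}) (\<lambda>(s, t). gs s t)"
    and gst_cont: "continuous_on ({-e<..<e} \<times> {-e<..<e}) (\<lambda>(s, t). gst s t)"
  shows "gts 0 0 = gst 0 0"
proof -
  have seg: "{min 0 s..max 0 s} \<subseteq> {-e<..<e}" if "\<bar>s\<bar> < e" for s :: real
    using that by auto
  have gs_int: "g s t - g 0 t = oint 0 s (\<lambda>\<sigma>. gs \<sigma> t)" if "\<bar>s\<bar> < e" "\<bar>t\<bar> < e" for s t
    using that gs seg[OF that(1)]
    by (subst oint_fundamental_theorem[where G="\<lambda>\<sigma>. g \<sigma> t"])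
      (auto simp: has_field_derivative_at_within subset_iff)
  have gst_int: "gt s 0 - gt 0 0 = oint 0 s (\<lambda>\<sigma>. gst \<sigma> 0)" if s: "\<bar>s\<bar> < e" for s
  proof -
    have "((\<lambda>t. g s t - g 0 t) has_real_derivative gt s 0 - gt 0 0) (at 0)"
      using gt[of s 0] gt[of 0 0] s e by (intro DERIV_diff) auto
    then have lhs: "((\<lambda>t. oint 0 s (\<lambda>\<sigma>. gs \<sigma> t)) has_real_derivative gt s 0 - gt 0 0) (at 0)"
      by (rule has_field_derivative_transform_within_open[where S="{-e<..<e}"]) (use gs_int s e in auto)
    have "continuous_on (ball 0 e \<times> {min 0 s..max 0 s}) (\<lambda>z. (\<lambda>(s, t). gst s t) (snd z, fst z))"
      using seg[OF s]
      by (intro continuous_on_compose2[OF gst_cont, of _ "\<lambda>z. (snd z, fst z)"])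
        (auto intro!: continuous_intros)
    moreover have "continuous_on {min 0 s..max 0 s} (\<lambda>\<sigma>. (\<lambda>(s, t). gs s t) (\<sigma>, t))"
      if "t \<in> ball 0 e" for t
      using seg[OF s] that
      by (intro continuous_on_compose2[OF gs_cont, of _ "\<lambda>\<sigma>. (\<sigma>, t)"])
        (auto intro!: continuous_intros)
    ultimately have rhs: "((\<lambda>t. oint 0 s (\<lambda>\<sigma>. gs \<sigma> t)) has_real_derivative oint 0 s (\<lambda>\<sigma>. gst \<sigma> 0)) (at 0)"
      using gst seg[OF s] e
      by (intro oint_has_real_derivative_parameter[where r=e]) (auto simp: subset_iff case_prod_unfold)
    show ?thesis using DERIV_unique[OF lhs rhs] .
  qed
  have "((\<lambda>s. gt s 0 - gt 0 0) has_real_derivative gts 0 0) (at 0)"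
    using gts[of 0 0] e by (auto intro!: derivative_eq_intros)
  then have lhs: "((\<lambda>s. oint 0 s (\<lambda>\<sigma>. gst \<sigma> 0)) has_real_derivative gts 0 0) (at 0)"
    by (rule has_field_derivative_transform_within_open[where S="{-e<..<e}"]) (use gst_int e in auto)
  have "continuous_on {-e/2..e/2} (\<lambda>\<sigma>. (\<lambda>(s, t). gst s t) (\<sigma>, 0))"
    using e by (intro continuous_on_compose2[OF gst_cont, of _ "\<lambda>\<sigma>. (\<sigma>, 0)"])
      (auto intro!: continuous_intros)
  then have rhs: "((\<lambda>s. oint 0 s (\<lambda>\<sigma>. gst \<sigma> 0)) has_real_derivative gst 0 0) (at 0)"
    using e by (intro oint_has_real_derivative[where lo="-e/2" and hi="e/2"]) auto
  show ?thesis using DERIV_unique[OF lhs rhs] .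
qed

lemma smooth_on_second_derivative_symmetric:
  fixes F :: "'a::euclidean_space \<Rightarrow> real"
  assumes S: "open S" and F: "smooth_on S F" and p: "p \<in> S"
  shows "frechet_derivative (\<lambda>q. frechet_derivative F (at q) z) (at p) w =
         frechet_derivative (\<lambda>q. frechet_derivative F (at q) w) (at p) z"
proof -
  obtain \<delta> where \<delta>: "\<delta> > 0" "ball p \<delta> \<subseteq> S" using S p openE by blast
  define e where "e = \<delta> / (norm w + norm z + 1)"
  have norms: "norm w + norm z + 1 > 0" by (simp add: add_nonneg_pos)
  have e: "e > 0" using \<delta> norms by (simp add: e_def)
  define q where "q s t = p + s *\<^sub>R w + t *\<^sub>R z" for s t
  have q_in_S: "q s t \<in> S" if "\<bar>s\<bar> < e" "\<bar>t\<bar> < e" for s t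
  proof -
    have "norm (s *\<^sub>R w + t *\<^sub>R z) \<le> \<bar>s\<bar> * norm w + \<bar>t\<bar> * norm z"
      using norm_triangle_ineq[of "s *\<^sub>R w" "t *\<^sub>R z"] by simp
    also have "\<dots> \<le> e * norm w + e * norm z"
      using that by (intro add_mono mult_right_mono) auto
    also have "\<dots> < e * (norm w + norm z + 1)"
      using e by (simp add: algebra_simps)
    also have "\<dots> = \<delta>"
      using norms by (simp add: e_def)
    finally have "dist (q s t) p < \<delta>"
      by (simp add: q_def dist_norm add.assoc)
    then show ?thesis using \<delta>(2) by (auto simp: dist_commute)
  qed
  define Fw where "Fw q = frechet_derivative F (at q) w" for q
  define Fz where "Fz q = frechet_derivative F (at q) z" for q
  have Fw: "smooth_on S Fw" and Fz: "smooth_on S Fz" and Fwz: "smooth_on S (\<lambda>q. frechet_derivative Fw (at q) z)"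
    unfolding Fw_def Fz_def by (intro smooth_on_frechet_derivative F)+
  have along_w: "((\<lambda>s. G (q s t)) has_real_derivative frechet_derivative G (at (q s t)) w) (at s)"
    if "smooth_on S G" "\<bar>s\<bar> < e" "\<bar>t\<bar> < e" for G s t
  proof -
    have "q s' t = (p + t *\<^sub>R z) + s' *\<^sub>R w" for s' by (simp add: q_def algebra_simps)
    then show ?thesis
      using has_real_derivative_along_line[of G "p + t *\<^sub>R z" s w]
        smooth_on_differentiable[OF that(1) q_in_S[OF that(2,3)]] by simp
  qed
  have along_z: "((\<lambda>t. G (q s t)) has_real_derivative frechet_derivative G (at (q s t)) z) (at t)"
    if "smooth_on S G" "\<bar>s\<bar> < e" "\<bar>t\<bar> < e" for G s t
  proof -
    have "q s t' = (p + s *\<^sub>R w) + t' *\<^sub>R z" for t' by (simp add: q_def)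
    then show ?thesis
      using has_real_derivative_along_line[of G "p + s *\<^sub>R w" t z]
        smooth_on_differentiable[OF that(1) q_in_S[OF that(2,3)]] by simp
  qed
  have cont: "continuous_on ({-e<..<e} \<times> {-e<..<e}) (\<lambda>(s, t). G (q s t))" if "smooth_on S G" for G
  proof -
    have "continuous_on ({-e<..<e} \<times> {-e<..<e}) (\<lambda>x. G (q (fst x) (snd x)))"
      using q_in_S
      by (intro continuous_on_compose2[OF smooth_on_continuous_on[OF that]])
        (auto simp: q_def intro!: continuous_intros)
    then show ?thesis by (simp add: case_prod_unfold)
  qed
  have "frechet_derivative Fz (at (q 0 0)) w = frechet_derivative Fw (at (q 0 0)) z"
    by (rule real_mixed_partials_eq[OF e, where g="\<lambda>s t. F (q s t)" and gs="\<lambda>s t. Fw (q s t)"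
          and gt="\<lambda>s t. Fz (q s t)" and gst="\<lambda>s t. frechet_derivative Fw (at (q s t)) z"
          and gts="\<lambda>s t. frechet_derivative Fz (at (q s t)) w"])
      (simp_all add: along_w[OF F, folded Fw_def] along_z[OF F, folded Fz_def] along_w[OF Fz]
        along_z[OF Fw] cont[OF Fw] cont[OF Fwz])
  then show ?thesis
    unfolding Fw_def[abs_def] Fz_def[abs_def] by (simp add: q_def)
qed

section \<open>Partial derivatives in tangent coordinates\<close>

definition uncurry4 ::
  "(real \<Rightarrow> real \<Rightarrow> real \<Rightarrow> real \<Rightarrow> real) \<Rightarrow> (real \<times> real) \<times> (real \<times> real) \<Rightarrow> real" where
  "uncurry4 f = (\<lambda>((x, y), (u, v)). f x y u v)"

lemma uncurry4_apply [simp]: "uncurry4 f ((x, y), (u, v)) = f x y u v"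
  by (simp add: uncurry4_def)

lemma smooth4_iff_uncurry4: "smooth4 U f \<longleftrightarrow> smooth_on (U \<times> UNIV) (uncurry4 f)"
  by (simp add: smooth4_def uncurry4_def)

lemma smooth4_has_real_derivative_frechet:
  fixes u v :: real
  assumes "smooth4 U f" "(x, y) \<in> U"
  defines "f' \<equiv> frechet_derivative (uncurry4 f) (at ((x, y), (u, v)))"
  shows "((\<lambda>s. f s y u v) has_real_derivative f' ((1, 0), (0, 0))) (at x)"
    and "((\<lambda>s. f x s u v) has_real_derivative f' ((0, 1), (0, 0))) (at y)"
    and "((\<lambda>s. f x y s v) has_real_derivative f' ((0, 0), (1, 0))) (at u)"
    and "((\<lambda>s. f x y u s) has_real_derivative f' ((0, 0), (0, 1))) (at v)"
proof -
  have "uncurry4 f differentiable (at ((x, y), (u, v)))"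
    using smooth_on_differentiable[of "U \<times> UNIV" "uncurry4 f" "((x, y), (u, v))"] assms(1,2)
    by (simp add: smooth4_iff_uncurry4)
  then show "((\<lambda>s. f s y u v) has_real_derivative f' ((1, 0), (0, 0))) (at x)"
    and "((\<lambda>s. f x s u v) has_real_derivative f' ((0, 1), (0, 0))) (at y)"
    and "((\<lambda>s. f x y s v) has_real_derivative f' ((0, 0), (1, 0))) (at u)"
    and "((\<lambda>s. f x y u s) has_real_derivative f' ((0, 0), (0, 1))) (at v)"
    using has_real_derivative_along_line[of "uncurry4 f" "((0, y), (u, v))" x "((1, 0), (0, 0))"]
      has_real_derivative_along_line[of "uncurry4 f" "((x, 0), (u, v))" y "((0, 1), (0, 0))"]
      has_real_derivative_along_line[of "uncurry4 f" "((x, y), (0, v))" u "((0, 0), (1, 0))"]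
      has_real_derivative_along_line[of "uncurry4 f" "((x, y), (u, 0))" v "((0, 0), (0, 1))"]
    by (simp_all add: f'_def)
qed

lemma d_eq_frechet_derivative:
  assumes "smooth4 U f" "(x, y) \<in> U"
  shows "d1 f x y u v = frechet_derivative (uncurry4 f) (at ((x, y), (u, v))) ((1, 0), (0, 0))"
    and "d2 f x y u v = frechet_derivative (uncurry4 f) (at ((x, y), (u, v))) ((0, 1), (0, 0))"
    and "d3 f x y u v = frechet_derivative (uncurry4 f) (at ((x, y), (u, v))) ((0, 0), (1, 0))"
    and "d4 f x y u v = frechet_derivative (uncurry4 f) (at ((x, y), (u, v))) ((0, 0), (0, 1))"
  using smooth4_has_real_derivative_frechet[OF assms, where u=u and v=v]
  by (simp_all add: d1_def d2_def d3_def d4_def DERIV_imp_deriv)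

lemma smooth4_has_real_derivative:
  assumes "smooth4 U f" "(x, y) \<in> U"
  shows "((\<lambda>s. f s y u v) has_real_derivative d1 f x y u v) (at x)"
    and "((\<lambda>s. f x s u v) has_real_derivative d2 f x y u v) (at y)"
    and "((\<lambda>s. f x y s v) has_real_derivative d3 f x y u v) (at u)"
    and "((\<lambda>s. f x y u s) has_real_derivative d4 f x y u v) (at v)"
  using smooth4_has_real_derivative_frechet[OF assms, where u=u and v=v] d_eq_frechet_derivative[OF assms, where u=u and v=v]
  by simp_all

lemma smooth4_frechet_derivative:
  assumes U: "open U" and f: "smooth4 U f"
    and D: "\<And>x y u v. (x, y) \<in> U \<Longrightarrow> D x y u v = frechet_derivative (uncurry4 f) (at ((x, y), (u, v))) w"
  shows "smooth4 U D"
  unfolding smooth4_iff_uncurry4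
proof (rule smooth_on_cong[OF _ _ smooth_on_frechet_derivative[of _ _ w]])
  show "open (U \<times> (UNIV :: (real \<times> real) set))" using U by (simp add: open_Times)
  show "smooth_on (U \<times> UNIV) (uncurry4 f)" using f by (simp add: smooth4_iff_uncurry4)
  fix p :: "(real \<times> real) \<times> (real \<times> real)" assume "p \<in> U \<times> UNIV"
  then show "frechet_derivative (uncurry4 f) (at p) w = uncurry4 D p"
    using D by (cases p) auto
qed

lemma smooth4_d:
  assumes "open U" "smooth4 U f"
  shows "smooth4 U (d1 f)" "smooth4 U (d2 f)" "smooth4 U (d3 f)" "smooth4 U (d4 f)"
  using smooth4_frechet_derivative[OF assms] d_eq_frechet_derivative[OF assms(2)] by blast+

lemma smooth4_partial_derivatives_commute:
  assumes U: "open U" and f: "smooth4 U f" and xy: "(x, y) \<in> U"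
    and Di: "\<And>g x y u v. smooth4 U g \<Longrightarrow> (x, y) \<in> U \<Longrightarrow>
      Di g x y u v = frechet_derivative (uncurry4 g) (at ((x, y), (u, v))) wi"
    and Dj: "\<And>g x y u v. smooth4 U g \<Longrightarrow> (x, y) \<in> U \<Longrightarrow>
      Dj g x y u v = frechet_derivative (uncurry4 g) (at ((x, y), (u, v))) wj"
  shows "Di (Dj f) x y u v = Dj (Di f) x y u v"
proof -
  let ?p = "((x, y), (u, v))" and ?S = "U \<times> (UNIV :: (real \<times> real) set)"
  have S: "open ?S" and p: "?p \<in> ?S" using U xy by (simp_all add: open_Times)
  have F: "smooth_on ?S (uncurry4 f)" using f by (simp add: smooth4_iff_uncurry4)
  have Djf: "smooth4 U (Dj f)" and Dif: "smooth4 U (Di f)"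
    using smooth4_frechet_derivative[OF U f] Dj[OF f] Di[OF f] by blast+
  have transfer: "frechet_derivative (uncurry4 g) (at ?p) = frechet_derivative (\<lambda>q. frechet_derivative (uncurry4 f) (at q) w) (at ?p)"
    if "smooth4 U g" "\<And>x y u v. (x, y) \<in> U \<Longrightarrow> g x y u v = frechet_derivative (uncurry4 f) (at ((x, y), (u, v))) w"
    for g w
  proof (rule frechet_derivative_transform_within_open[OF _ S p])
    show "uncurry4 g differentiable at ?p"
      using smooth_on_differentiable[OF that(1)[unfolded smooth4_iff_uncurry4] p] .
    fix q assume "q \<in> ?S"
    then show "uncurry4 g q = frechet_derivative (uncurry4 f) (at q) w"
      using that(2) by (cases q) auto
  qed
  have "Di (Dj f) x y u v = frechet_derivative (\<lambda>q. frechet_derivative (uncurry4 f) (at q) wj) (at ?p) wi"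
    using Di[OF Djf xy] transfer[OF Djf Dj[OF f]] by simp
  also have "\<dots> = frechet_derivative (\<lambda>q. frechet_derivative (uncurry4 f) (at q) wi) (at ?p) wj"
    by (rule smooth_on_second_derivative_symmetric[OF S F p])
  also have "\<dots> = Dj (Di f) x y u v"
    using Dj[OF Dif xy] transfer[OF Dif Di[OF f]] by simp
  finally show ?thesis .
qed

lemma continuous_on_smooth4_compose:
  assumes "smooth4 U f" "continuous_on T (\<lambda>t. ((X t, Y t), (Vx t, Vy t)))" "\<And>t. t \<in> T \<Longrightarrow> (X t, Y t) \<in> U"
  shows "continuous_on T (\<lambda>t. f (X t) (Y t) (Vx t) (Vy t))"
  using continuous_on_compose2[OF smooth_on_continuous_on assms(2), of "U \<times> UNIV" "uncurry4 f"] assms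
  by (auto simp: smooth4_iff_uncurry4)

lemma smooth4_has_real_derivative_velocity_line:
  assumes "smooth4 U f" "(x, y) \<in> U"
  shows "((\<lambda>s. f x y (\<alpha> * s) (\<beta> * s)) has_real_derivative \<alpha> * d3 f x y 0 0 + \<beta> * d4 f x y 0 0) (at 0)"
proof -
  let ?p = "((x, y), (0::real, 0::real))"
  let ?f' = "frechet_derivative (uncurry4 f) (at ?p)"
  have diff: "uncurry4 f differentiable (at ?p)"
    using smooth_on_differentiable[of "U \<times> UNIV" "uncurry4 f" ?p] assms by (simp add: smooth4_iff_uncurry4)
  have "?f' ((0, 0), (\<alpha>, \<beta>)) = ?f' (\<alpha> *\<^sub>R ((0, 0), (1, 0)) + \<beta> *\<^sub>R ((0, 0), (0, 1)))"
    by simp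
  also have "\<dots> = \<alpha> * ?f' ((0, 0), (1, 0)) + \<beta> * ?f' ((0, 0), (0, 1))"
    by (simp only: linear_add[OF linear_frechet_derivative[OF diff]]
        linear_cmul[OF linear_frechet_derivative[OF diff]] real_scaleR_def)
  finally have "?f' ((0, 0), (\<alpha>, \<beta>)) = \<alpha> * ?f' ((0, 0), (1, 0)) + \<beta> * ?f' ((0, 0), (0, 1))" .
  moreover have "((\<lambda>s. uncurry4 f (?p + s *\<^sub>R ((0, 0), (\<alpha>, \<beta>)))) has_real_derivative ?f' ((0, 0), (\<alpha>, \<beta>))) (at 0)"
    using has_real_derivative_along_line[of "uncurry4 f" ?p 0 "((0, 0), (\<alpha>, \<beta>))"] diff by simp
  ultimately show ?thesis
    using d_eq_frechet_derivative(3,4)[OF assms, of 0 0] by (simp add: mult.commute)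
qed

section \<open>Potentials of closed fields on a fibre\<close>

lemma continuous_on_curried_compose:
  fixes f :: "real \<Rightarrow> real \<Rightarrow> real"
  assumes "continuous_on UNIV (\<lambda>(u, v). f u v)" "continuous_on T X" "continuous_on T Y"
  shows "continuous_on T (\<lambda>t. f (X t) (Y t))"
  using continuous_on_compose2[OF assms(1) continuous_on_Pair[OF assms(2,3)]] by simp

definition closed_field :: "(real \<Rightarrow> real \<Rightarrow> real) \<Rightarrow> (real \<Rightarrow> real \<Rightarrow> real) \<Rightarrow> bool" where
  "closed_field f g \<longleftrightarrow>
     continuous_on UNIV (\<lambda>(u, v). f u v) \<and> continuous_on UNIV (\<lambda>(u, v). g u v) \<and>
     (\<exists>h. continuous_on UNIV (\<lambda>(u, v). h u v) \<and>
        (\<forall>u v. ((\<lambda>s. f u s) has_real_derivative h u v) (at v) \<and>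
               ((\<lambda>s. g s v) has_real_derivative h u v) (at u)))"

definition potential :: "(real \<Rightarrow> real \<Rightarrow> real) \<Rightarrow> (real \<Rightarrow> real \<Rightarrow> real) \<Rightarrow> real \<Rightarrow> real \<Rightarrow> real" where
  "potential f g u v = oint 0 u (\<lambda>\<nu>. f \<nu> v) + oint 0 v (\<lambda>\<sigma>. g 0 \<sigma>)"

definition has_partials ::
  "(real \<Rightarrow> real \<Rightarrow> real) \<Rightarrow> (real \<Rightarrow> real \<Rightarrow> real) \<Rightarrow> (real \<Rightarrow> real \<Rightarrow> real) \<Rightarrow> bool" where
  "has_partials F f g \<longleftrightarrow>
     (\<forall>u v. ((\<lambda>s. F s v) has_real_derivative f u v) (at u) \<and> ((\<lambda>s. F u s) has_real_derivative g u v) (at v))"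

lemma potential_0_0 [simp]: "potential f g 0 0 = 0"
  by (simp add: potential_def oint_def)

lemma has_partials_potential:
  assumes "closed_field f g"
  shows "has_partials (potential f g) f g"
  unfolding has_partials_def
proof (intro allI conjI)
  fix u v :: real
  obtain h where f: "continuous_on UNIV (\<lambda>(u, v). f u v)" and g: "continuous_on UNIV (\<lambda>(u, v). g u v)"
    and h: "continuous_on UNIV (\<lambda>(u, v). h u v)"
    and f_v: "\<And>u v. ((\<lambda>s. f u s) has_real_derivative h u v) (at v)"
    and g_u: "\<And>u v. ((\<lambda>s. g s v) has_real_derivative h u v) (at u)"
    using assms unfolding closed_field_def by blast
  have "((\<lambda>s. oint 0 s (\<lambda>\<nu>. f \<nu> v) + oint 0 v (\<lambda>\<sigma>. g 0 \<sigma>)) has_real_derivative f u v + 0) (at u)"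
    by (intro DERIV_add oint_has_real_derivative_UNIV DERIV_const)
      (intro continuous_on_curried_compose[OF f] continuous_intros)
  then show "((\<lambda>s. potential f g s v) has_real_derivative f u v) (at u)"
    by (simp add: potential_def)
  have "((\<lambda>s. oint 0 u (\<lambda>\<nu>. f \<nu> s)) has_real_derivative oint 0 u (\<lambda>\<nu>. h \<nu> v)) (at v)"
  proof (rule oint_has_real_derivative_parameter[where r=1])
    have "continuous_on (ball v 1 \<times> {min 0 u..max 0 u}) (\<lambda>z. h (snd z) (fst z))"
      by (intro continuous_on_curried_compose[OF h] continuous_intros)
    then show "continuous_on (ball v 1 \<times> {min 0 u..max 0 u}) (\<lambda>(s, \<nu>). h \<nu> s)"
      by (simp add: case_prod_unfold)
  qed (auto intro: f_v continuous_on_curried_compose[OF f] continuous_intros)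
  moreover have "oint 0 u (\<lambda>\<nu>. h \<nu> v) = g u v - g 0 v"
    using g_u by (intro oint_fundamental_theorem) (simp add: has_field_derivative_at_within)
  moreover have "((\<lambda>s. oint 0 s (\<lambda>\<sigma>. g 0 \<sigma>)) has_real_derivative g 0 v) (at v)"
    by (intro oint_has_real_derivative_UNIV continuous_on_curried_compose[OF g] continuous_intros)
  ultimately have "((\<lambda>s. oint 0 u (\<lambda>\<nu>. f \<nu> s) + oint 0 s (\<lambda>\<sigma>. g 0 \<sigma>)) has_real_derivative
      (g u v - g 0 v) + g 0 v) (at v)"
    by (intro DERIV_add) simp_all
  then show "((\<lambda>s. potential f g u s) has_real_derivative g u v) (at v)"
    by (simp add: potential_def)
qed

lemma potential_has_derivative:
  assumes "closed_field f g"
  shows "((\<lambda>z. potential f g (fst z) (snd z)) has_derivative (\<lambda>h. fst h * f u v + snd h * g u v)) (at (u, v))"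
proof -
  have partials: "has_partials (potential f g) f g"
    by (rule has_partials_potential[OF assms])
  have g: "continuous_on UNIV (\<lambda>(u, v). g u v)"
    using assms by (simp add: closed_field_def)
  have "((\<lambda>(a, b). potential f g a b) has_derivative
      (\<lambda>(ta, tb). f u v * ta + blinfun_mult_right (g u v) tb)) (at (u, v) within UNIV \<times> UNIV)"
  proof (rule has_derivative_partialsI[where fy="\<lambda>a b. blinfun_mult_right (g a b)"])
    show "((\<lambda>a. potential f g a v) has_derivative (*) (f u v)) (at u within UNIV)"
      using partials by (simp add: has_partials_def has_field_derivative_def)
    show "((\<lambda>b. potential f g a b) has_derivative blinfun_apply (blinfun_mult_right (g a b))) (at b within UNIV)"
      for a b
      using partials unfolding has_partials_def has_field_derivative_def by simp
    have "continuous_on UNIV (\<lambda>z. blinfun_mult_right (g (fst z) (snd z)))"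
      by (intro continuous_intros continuous_on_curried_compose[OF g])
    then show "continuous (at (u, v) within UNIV \<times> UNIV) (\<lambda>(a, b). blinfun_mult_right (g a b))"
      by (simp add: continuous_on_eq_continuous_at case_prod_unfold)
  qed auto
  then show ?thesis
    by (simp add: case_prod_unfold mult.commute)
qed

lemma has_partials_linear_pullback:
  assumes F: "\<And>u v. ((\<lambda>z. F (fst z) (snd z)) has_derivative (\<lambda>h. fst h * f u v + snd h * g u v)) (at (u, v))"
  shows "has_partials (\<lambda>a b. F (m11 * a + m12 * b) (m21 * a + m22 * b))
    (\<lambda>a b. m11 * f (m11 * a + m12 * b) (m21 * a + m22 * b) + m21 * g (m11 * a + m12 * b) (m21 * a + m22 * b))
    (\<lambda>a b. m12 * f (m11 * a + m12 * b) (m21 * a + m22 * b) + m22 * g (m11 * a + m12 * b) (m21 * a + m22 * b))"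
proof -
  have line: "((\<lambda>s. F (\<alpha> * s + c) (\<beta> * s + d)) has_real_derivative
      \<alpha> * f (\<alpha> * s0 + c) (\<beta> * s0 + d) + \<beta> * g (\<alpha> * s0 + c) (\<beta> * s0 + d)) (at s0)"
    for \<alpha> \<beta> c d s0
  proof -
    have "(((\<lambda>z. F (fst z) (snd z)) \<circ> (\<lambda>s. (\<alpha> * s + c, \<beta> * s + d))) has_derivative
        ((\<lambda>h. fst h * f (\<alpha> * s0 + c) (\<beta> * s0 + d) + snd h * g (\<alpha> * s0 + c) (\<beta> * s0 + d)) \<circ>
         (\<lambda>h. (\<alpha> * h, \<beta> * h)))) (at s0)"
      by (intro diff_chain_at F) (auto intro!: derivative_eq_intros)
    moreover have "(\<lambda>h. fst h * f (\<alpha> * s0 + c) (\<beta> * s0 + d) + snd h * g (\<alpha> * s0 + c) (\<beta> * s0 + d)) \<circ>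
        (\<lambda>h. (\<alpha> * h, \<beta> * h)) = (*) (\<alpha> * f (\<alpha> * s0 + c) (\<beta> * s0 + d) + \<beta> * g (\<alpha> * s0 + c) (\<beta> * s0 + d))"
      by (auto simp: algebra_simps)
    ultimately show ?thesis
      by (simp add: has_field_derivative_def o_def)
  qed
  show ?thesis
    unfolding has_partials_def
  proof (intro allI conjI)
    fix a b
    show "((\<lambda>s. F (m11 * s + m12 * b) (m21 * s + m22 * b)) has_real_derivative
        m11 * f (m11 * a + m12 * b) (m21 * a + m22 * b) + m21 * g (m11 * a + m12 * b) (m21 * a + m22 * b)) (at a)"
      by (rule line)
    show "((\<lambda>s. F (m11 * a + m12 * s) (m21 * a + m22 * s)) has_real_derivative
        m12 * f (m11 * a + m12 * b) (m21 * a + m22 * b) + m22 * g (m11 * a + m12 * b) (m21 * a + m22 * b)) (at b)"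
      using line[of m12 "m11 * a" m22 "m21 * a" b] by (simp add: add.commute)
  qed
qed

lemma has_partials_lincomb:
  assumes "has_partials F1 f1 g1" "has_partials F2 f2 g2"
  shows "has_partials (\<lambda>a b. c1 * F1 a b + c2 * F2 a b)
    (\<lambda>a b. c1 * f1 a b + c2 * f2 a b) (\<lambda>a b. c1 * g1 a b + c2 * g2 a b)"
  using assms by (auto simp: has_partials_def intro!: derivative_eq_intros)

lemma has_partials_unique:
  assumes "has_partials F f g" "has_partials G f g" "F 0 0 = G 0 0"
  shows "F u v = G u v"
proof -
  have "has_partials (\<lambda>a b. 1 * F a b + (-1) * G a b) (\<lambda>a b. 0) (\<lambda>a b. 0)"
    using has_partials_lincomb[OF assms(1,2), of 1 "-1"] by simp
  then have "F u v - G u v = F 0 v - G 0 v" "F 0 v - G 0 v = F 0 0 - G 0 0"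
    using DERIV_isconst_all[of "\<lambda>s. F s v - G s v"] DERIV_isconst_all[of "\<lambda>s. F 0 s - G 0 s"]
    by (auto simp: has_partials_def)
  then show ?thesis using assms(3) by simp
qed

lemma potential_linear_pullback:
  assumes f: "closed_field f1 f2" and g12: "closed_field g1 g2" and g23: "closed_field g2 g3"
    and f1: "\<And>a b. f1 a b =
        c1 * (m11 * g1 (m11 * a + m12 * b) (m21 * a + m22 * b) + m21 * g2 (m11 * a + m12 * b) (m21 * a + m22 * b))
      + c2 * (m11 * g2 (m11 * a + m12 * b) (m21 * a + m22 * b) + m21 * g3 (m11 * a + m12 * b) (m21 * a + m22 * b))"
    and f2: "\<And>a b. f2 a b =
        c1 * (m12 * g1 (m11 * a + m12 * b) (m21 * a + m22 * b) + m22 * g2 (m11 * a + m12 * b) (m21 * a + m22 * b))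
      + c2 * (m12 * g2 (m11 * a + m12 * b) (m21 * a + m22 * b) + m22 * g3 (m11 * a + m12 * b) (m21 * a + m22 * b))"
  shows "potential f1 f2 a b =
    c1 * potential g1 g2 (m11 * a + m12 * b) (m21 * a + m22 * b)
    + c2 * potential g2 g3 (m11 * a + m12 * b) (m21 * a + m22 * b)"
proof (rule has_partials_unique[OF has_partials_potential[OF f]])
  have "has_partials (\<lambda>a b. c1 * potential g1 g2 (m11 * a + m12 * b) (m21 * a + m22 * b)
      + c2 * potential g2 g3 (m11 * a + m12 * b) (m21 * a + m22 * b))
    (\<lambda>a b. c1 * (m11 * g1 (m11 * a + m12 * b) (m21 * a + m22 * b) + m21 * g2 (m11 * a + m12 * b) (m21 * a + m22 * b))
      + c2 * (m11 * g2 (m11 * a + m12 * b) (m21 * a + m22 * b) + m21 * g3 (m11 * a + m12 * b) (m21 * a + m22 * b)))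
    (\<lambda>a b. c1 * (m12 * g1 (m11 * a + m12 * b) (m21 * a + m22 * b) + m22 * g2 (m11 * a + m12 * b) (m21 * a + m22 * b))
      + c2 * (m12 * g2 (m11 * a + m12 * b) (m21 * a + m22 * b) + m22 * g3 (m11 * a + m12 * b) (m21 * a + m22 * b)))"
    by (intro has_partials_lincomb has_partials_linear_pullback potential_has_derivative g12 g23)
  then show "has_partials (\<lambda>a b. c1 * potential g1 g2 (m11 * a + m12 * b) (m21 * a + m22 * b)
      + c2 * potential g2 g3 (m11 * a + m12 * b) (m21 * a + m22 * b)) f1 f2"
    by (simp add: f1[abs_def] f2[abs_def])
qed simp

section \<open>Consequences of the Helmholtz conditions\<close>

lemma helmholtzD:
  assumes "helmholtz U Ax Ay Bxx Bxy Byy"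
  shows "smooth4 U Ax" "smooth4 U Ay" "smooth4 U Bxx" "smooth4 U Bxy" "smooth4 U Byy"
    and "(x, y) \<in> U \<Longrightarrow> d4 Bxx x y u v = d3 Bxy x y u v"
    and "(x, y) \<in> U \<Longrightarrow> d4 Bxy x y u v = d3 Byy x y u v"
    and "(x, y) \<in> U \<Longrightarrow> d3 Ax x y u v = u * d1 Bxx x y u v + v * d2 Bxx x y u v"
    and "(x, y) \<in> U \<Longrightarrow> d4 Ay x y u v = u * d1 Byy x y u v + v * d2 Byy x y u v"
    and "(x, y) \<in> U \<Longrightarrow> d4 Ax x y u v + d3 Ay x y u v = 2 * u * d1 Bxy x y u v + 2 * v * d2 Bxy x y u v"
  using assms unfolding helmholtz_def by (auto simp: algebra_simps)

lemma d1_d2_cong: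
  assumes "open U" "(x, y) \<in> U" "\<And>x y u v. (x, y) \<in> U \<Longrightarrow> f x y u v = g x y u v"
  shows "d1 f x y u v = d1 g x y u v" "d2 f x y u v = d2 g x y u v"
proof -
  obtain r where r: "r > 0" "ball (x, y) r \<subseteq> U"
    using assms(1,2) openE by blast
  have "\<forall>\<^sub>F s in nhds x. (s, y) \<in> U"
    unfolding eventually_nhds using r
    by (intro exI[of _ "ball x r"]) (auto simp: subset_iff dist_Pair_Pair)
  moreover have "\<forall>\<^sub>F s in nhds y. (x, s) \<in> U"
    unfolding eventually_nhds using r
    by (intro exI[of _ "ball y r"]) (auto simp: subset_iff dist_Pair_Pair)
  ultimately show "d1 f x y u v = d1 g x y u v" "d2 f x y u v = d2 g x y u v"
    unfolding d1_def d2_def using assms(3)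
    by (auto intro!: deriv_cong_ev elim!: eventually_mono)
qed

lemma closed_field_smooth4:
  assumes U: "open U" and f: "smooth4 U f" and g: "smooth4 U g" and xy: "(x, y) \<in> U"
    and closed: "\<And>u v. d4 f x y u v = d3 g x y u v"
  shows "closed_field (f x y) (g x y)"
proof -
  have cont: "continuous_on UNIV (\<lambda>(u, v). h x y u v)" if "smooth4 U h" for h
    using continuous_on_smooth4_compose[OF that, of UNIV "\<lambda>_. x" "\<lambda>_. y" fst snd] xy
    by (simp add: case_prod_unfold continuous_on_Pair continuous_on_fst continuous_on_snd)
  show ?thesis
    unfolding closed_field_def
    using cont[OF f] cont[OF g] cont[OF smooth4_d(4)[OF U f]]
      smooth4_has_real_derivative(3,4)[OF _ xy] f g closed
    by metis
qed

lemma has_real_derivative_oint_smooth4: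
  assumes U: "open U" and f: "smooth4 U f" and xy: "(x, y) \<in> U"
    and \<gamma>: "continuous_on UNIV \<gamma>1" "continuous_on UNIV \<gamma>2"
  shows "((\<lambda>s. oint 0 b (\<lambda>t. f s y (\<gamma>1 t) (\<gamma>2 t))) has_real_derivative
      oint 0 b (\<lambda>t. d1 f x y (\<gamma>1 t) (\<gamma>2 t))) (at x)"
    and "((\<lambda>s. oint 0 b (\<lambda>t. f x s (\<gamma>1 t) (\<gamma>2 t))) has_real_derivative
      oint 0 b (\<lambda>t. d2 f x y (\<gamma>1 t) (\<gamma>2 t))) (at y)"
proof -
  obtain r where r: "r > 0" "ball (x, y) r \<subseteq> U"
    using U xy openE by blast
  have in_U_x: "(s, y) \<in> U" if "s \<in> ball x r" for s
    using that r(2) by (auto simp: subset_iff dist_Pair_Pair)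
  have in_U_y: "(x, s) \<in> U" if "s \<in> ball y r" for s
    using that r(2) by (auto simp: subset_iff dist_Pair_Pair)
  have cont: "continuous_on T (\<lambda>t. h (X t) (Y t) (\<gamma>1 (Z t)) (\<gamma>2 (Z t)))"
    if "smooth4 U h" "continuous_on T X" "continuous_on T Y" "continuous_on T Z" "\<And>t. t \<in> T \<Longrightarrow> (X t, Y t) \<in> U"
    for h :: "real \<Rightarrow> real \<Rightarrow> real \<Rightarrow> real \<Rightarrow> real" and T :: "'a::topological_space set" and X Y Z
    using that
    by (intro continuous_on_smooth4_compose[OF that(1)] continuous_on_Pair
        continuous_on_compose2[OF \<gamma>(1)] continuous_on_compose2[OF \<gamma>(2)]) auto
  show "((\<lambda>s. oint 0 b (\<lambda>t. f s y (\<gamma>1 t) (\<gamma>2 t))) has_real_derivative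
      oint 0 b (\<lambda>t. d1 f x y (\<gamma>1 t) (\<gamma>2 t))) (at x)"
  proof (rule oint_has_real_derivative_parameter[OF r(1)])
    show "continuous_on (ball x r \<times> {min 0 b..max 0 b}) (\<lambda>(s, t). d1 f s y (\<gamma>1 t) (\<gamma>2 t))"
      unfolding case_prod_unfold
      by (rule cont[OF smooth4_d(1)[OF U f]]) (auto intro!: continuous_intros in_U_x)
  qed (use in_U_x in \<open>auto intro: smooth4_has_real_derivative(1)[OF f]
      cont[OF f, of _ "\<lambda>_. _" "\<lambda>_. y" "\<lambda>t. t", simplified] continuous_intros\<close>)
  show "((\<lambda>s. oint 0 b (\<lambda>t. f x s (\<gamma>1 t) (\<gamma>2 t))) has_real_derivative
      oint 0 b (\<lambda>t. d2 f x y (\<gamma>1 t) (\<gamma>2 t))) (at y)"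
  proof (rule oint_has_real_derivative_parameter[OF r(1)])
    show "continuous_on (ball y r \<times> {min 0 b..max 0 b}) (\<lambda>(s, t). d2 f x s (\<gamma>1 t) (\<gamma>2 t))"
      unfolding case_prod_unfold
      by (rule cont[OF smooth4_d(2)[OF U f]]) (auto intro!: continuous_intros in_U_y)
  qed (use in_U_y in \<open>auto intro: smooth4_has_real_derivative(2)[OF f]
      cont[OF f, of _ "\<lambda>_. x" "\<lambda>_. _" "\<lambda>t. t", simplified] continuous_intros\<close>)
qed

text \<open>
  The \<open>u\<close>-derivative of \<open>D\<close> is \<open>2 \<partial>\<^sub>v\<partial>\<^sub>u A\<^sub>x - \<partial>\<^sub>u(\<partial>\<^sub>v A\<^sub>x + \<partial>\<^sub>u A\<^sub>y)\<close>, and both terms are computed from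
  the Helmholtz conditions on \<open>\<partial>\<^sub>u A\<^sub>x\<close> and \<open>\<partial>\<^sub>v A\<^sub>x + \<partial>\<^sub>u A\<^sub>y\<close> together with
  \<open>\<partial>\<^sub>v B\<^sub>x\<^sub>x = \<partial>\<^sub>u B\<^sub>x\<^sub>y\<close>; symmetrically for the \<open>v\<close>-derivative.
\<close>

lemma half_Dfun_has_real_derivative_u:
  assumes U: "open U" and lv: "helmholtz U Ax Ay Bxx Bxy Byy" and xy: "(x, y) \<in> U"
  shows "((\<lambda>s. Dfun Ax Ay x y s v / 2) has_real_derivative d2 Bxx x y u v - d1 Bxy x y u v) (at u)"
proof -
  note sm = helmholtzD(1-5)[OF lv] and H = helmholtzD(6-10)[OF lv xy]
  note d = smooth4_has_real_derivative[OF _ xy] and dd = smooth4_d[OF U]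
  note comm = smooth4_partial_derivatives_commute[OF U _ xy]
  have "d3 (d4 Ax) x y u v = d4 (d3 Ax) x y u v"
    by (rule comm[OF sm(1) d_eq_frechet_derivative(3,4)])
  also have "\<dots> = deriv (\<lambda>s. u * d1 Bxx x y u s + s * d2 Bxx x y u s) v"
    using H(3) by (simp add: d4_def)
  also have "\<dots> = u * d4 (d1 Bxx) x y u v + (v * d4 (d2 Bxx) x y u v + 1 * d2 Bxx x y u v)"
    by (intro DERIV_imp_deriv DERIV_add DERIV_cmult DERIV_mult' DERIV_ident
        d(4)[OF dd(1)[OF sm(3)]] d(4)[OF dd(2)[OF sm(3)]])
  also have "d4 (d1 Bxx) x y u v = d3 (d1 Bxy) x y u v"
    using comm[OF sm(3) d_eq_frechet_derivative(4,1)] comm[OF sm(4) d_eq_frechet_derivative(1,3)]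
      d1_d2_cong(1)[OF U xy helmholtzD(6)[OF lv]] by simp
  also have "d4 (d2 Bxx) x y u v = d3 (d2 Bxy) x y u v"
    using comm[OF sm(3) d_eq_frechet_derivative(4,2)] comm[OF sm(4) d_eq_frechet_derivative(2,3)]
      d1_d2_cong(2)[OF U xy helmholtzD(6)[OF lv]] by simp
  finally have d3_d4_Ax: "d3 (d4 Ax) x y u v =
      u * d3 (d1 Bxy) x y u v + (v * d3 (d2 Bxy) x y u v + 1 * d2 Bxx x y u v)" .
  have lhs: "((\<lambda>s. d4 Ax x y s v + d3 Ay x y s v) has_real_derivative
      d3 (d4 Ax) x y u v + d3 (d3 Ay) x y u v) (at u)"
    by (intro DERIV_add d(3)[OF dd(4)[OF sm(1)]] d(3)[OF dd(3)[OF sm(2)]])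
  have rhs: "((\<lambda>s. 2 * s * d1 Bxy x y s v + 2 * v * d2 Bxy x y s v) has_real_derivative
      (2 * u * d3 (d1 Bxy) x y u v + 2 * 1 * d1 Bxy x y u v) + 2 * v * d3 (d2 Bxy) x y u v) (at u)"
    by (intro DERIV_add DERIV_cmult DERIV_mult' DERIV_ident
        d(3)[OF dd(1)[OF sm(4)]] d(3)[OF dd(2)[OF sm(4)]])
  have sum: "d3 (d4 Ax) x y u v + d3 (d3 Ay) x y u v =
      (2 * u * d3 (d1 Bxy) x y u v + 2 * 1 * d1 Bxy x y u v) + 2 * v * d3 (d2 Bxy) x y u v"
    using H(5) rhs by (intro DERIV_unique[OF lhs]) simp
  have "((\<lambda>s. Dfun Ax Ay x y s v / 2) has_real_derivative
      (d3 (d4 Ax) x y u v - d3 (d3 Ay) x y u v) / 2) (at u)"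
    unfolding Dfun_def by (intro DERIV_cdivide DERIV_diff d(3)[OF dd(4)[OF sm(1)]] d(3)[OF dd(3)[OF sm(2)]])
  moreover have "(d3 (d4 Ax) x y u v - d3 (d3 Ay) x y u v) / 2 = d2 Bxx x y u v - d1 Bxy x y u v"
    using d3_d4_Ax sum by (simp add: field_simps)
  ultimately show ?thesis by simp
qed

lemma half_Dfun_has_real_derivative_v:
  assumes U: "open U" and lv: "helmholtz U Ax Ay Bxx Bxy Byy" and xy: "(x, y) \<in> U"
  shows "((\<lambda>s. Dfun Ax Ay x y u s / 2) has_real_derivative d2 Bxy x y u v - d1 Byy x y u v) (at v)"
proof -
  note sm = helmholtzD(1-5)[OF lv] and H = helmholtzD(6-10)[OF lv xy]
  note d = smooth4_has_real_derivative[OF _ xy] and dd = smooth4_d[OF U]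
  note comm = smooth4_partial_derivatives_commute[OF U _ xy]
  have "d4 (d3 Ay) x y u v = d3 (d4 Ay) x y u v"
    by (rule comm[OF sm(2) d_eq_frechet_derivative(4,3)])
  also have "\<dots> = deriv (\<lambda>s. s * d1 Byy x y s v + v * d2 Byy x y s v) u"
    using H(4) by (simp add: d3_def)
  also have "\<dots> = (u * d3 (d1 Byy) x y u v + 1 * d1 Byy x y u v) + v * d3 (d2 Byy) x y u v"
    by (intro DERIV_imp_deriv DERIV_add DERIV_cmult DERIV_mult' DERIV_ident
        d(3)[OF dd(1)[OF sm(5)]] d(3)[OF dd(2)[OF sm(5)]])
  also have "d3 (d1 Byy) x y u v = d4 (d1 Bxy) x y u v"
    using comm[OF sm(5) d_eq_frechet_derivative(3,1)] comm[OF sm(4) d_eq_frechet_derivative(1,4)]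
      d1_d2_cong(1)[OF U xy helmholtzD(7)[OF lv]] by simp
  also have "d3 (d2 Byy) x y u v = d4 (d2 Bxy) x y u v"
    using comm[OF sm(5) d_eq_frechet_derivative(3,2)] comm[OF sm(4) d_eq_frechet_derivative(2,4)]
      d1_d2_cong(2)[OF U xy helmholtzD(7)[OF lv]] by simp
  finally have d4_d3_Ay: "d4 (d3 Ay) x y u v =
      (u * d4 (d1 Bxy) x y u v + 1 * d1 Byy x y u v) + v * d4 (d2 Bxy) x y u v" .
  have lhs: "((\<lambda>s. d4 Ax x y u s + d3 Ay x y u s) has_real_derivative
      d4 (d4 Ax) x y u v + d4 (d3 Ay) x y u v) (at v)"
    by (intro DERIV_add d(4)[OF dd(4)[OF sm(1)]] d(4)[OF dd(3)[OF sm(2)]])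
  have rhs: "((\<lambda>s. 2 * u * d1 Bxy x y u s + 2 * s * d2 Bxy x y u s) has_real_derivative
      2 * u * d4 (d1 Bxy) x y u v + (2 * v * d4 (d2 Bxy) x y u v + 2 * 1 * d2 Bxy x y u v)) (at v)"
    by (intro DERIV_add DERIV_cmult DERIV_mult' DERIV_ident
        d(4)[OF dd(1)[OF sm(4)]] d(4)[OF dd(2)[OF sm(4)]])
  have sum: "d4 (d4 Ax) x y u v + d4 (d3 Ay) x y u v =
      2 * u * d4 (d1 Bxy) x y u v + (2 * v * d4 (d2 Bxy) x y u v + 2 * 1 * d2 Bxy x y u v)"
    using H(5) rhs by (intro DERIV_unique[OF lhs]) simp
  have "((\<lambda>s. Dfun Ax Ay x y u s / 2) has_real_derivative
      (d4 (d4 Ax) x y u v - d4 (d3 Ay) x y u v) / 2) (at v)"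
    unfolding Dfun_def by (intro DERIV_cdivide DERIV_diff d(4)[OF dd(4)[OF sm(1)]] d(4)[OF dd(3)[OF sm(2)]])
  moreover have "(d4 (d4 Ax) x y u v - d4 (d3 Ay) x y u v) / 2 = d2 Bxy x y u v - d1 Byy x y u v"
    using d4_d3_Ay sum by (simp add: field_simps)
  ultimately show ?thesis by simp
qed

lemma kappa_x_eq_potential: "kappa_x Bxx Bxy x y u v = - potential (Bxx x y) (Bxy x y) u v"
  by (simp add: kappa_x_def potential_def)

lemma kappa_y_eq_potential: "kappa_y Bxy Byy x y u v = - potential (Bxy x y) (Byy x y) u v"
  by (simp add: kappa_y_def potential_def)

lemma helmholtz_closed_fields:
  assumes U: "open U" and lv: "helmholtz U Ax Ay Bxx Bxy Byy" and xy: "(x, y) \<in> U"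
  shows "closed_field (Bxx x y) (Bxy x y)" "closed_field (Bxy x y) (Byy x y)"
  by (rule closed_field_smooth4[OF U helmholtzD(3,4)[OF lv] xy helmholtzD(6)[OF lv xy]],
      rule closed_field_smooth4[OF U helmholtzD(4,5)[OF lv] xy helmholtzD(7)[OF lv xy]])

lemma kappa_vertical_partials:
  assumes U: "open U" and lv: "helmholtz U Ax Ay Bxx Bxy Byy" and xy: "(x, y) \<in> U"
  shows "- d3 (kappa_x Bxx Bxy) x y u v = Bxx x y u v"
    and "- d4 (kappa_x Bxx Bxy) x y u v = Bxy x y u v"
    and "- d3 (kappa_y Bxy Byy) x y u v = Bxy x y u v"
    and "- d4 (kappa_y Bxy Byy) x y u v = Byy x y u v"
proof -
  have "has_partials (potential (Bxx x y) (Bxy x y)) (Bxx x y) (Bxy x y)"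
    and "has_partials (potential (Bxy x y) (Byy x y)) (Bxy x y) (Byy x y)"
    using has_partials_potential helmholtz_closed_fields[OF assms] by blast+
  then have "((\<lambda>s. - potential (Bxx x y) (Bxy x y) s v) has_real_derivative - Bxx x y u v) (at u)"
    and "((\<lambda>s. - potential (Bxx x y) (Bxy x y) u s) has_real_derivative - Bxy x y u v) (at v)"
    and "((\<lambda>s. - potential (Bxy x y) (Byy x y) s v) has_real_derivative - Bxy x y u v) (at u)"
    and "((\<lambda>s. - potential (Bxy x y) (Byy x y) u s) has_real_derivative - Byy x y u v) (at v)"
    unfolding has_partials_def by (auto intro!: DERIV_minus)
  then show "- d3 (kappa_x Bxx Bxy) x y u v = Bxx x y u v"
    and "- d4 (kappa_x Bxx Bxy) x y u v = Bxy x y u v"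
    and "- d3 (kappa_y Bxy Byy) x y u v = Bxy x y u v"
    and "- d4 (kappa_y Bxy Byy) x y u v = Byy x y u v"
    by (simp_all add: d3_def d4_def kappa_x_eq_potential kappa_y_eq_potential DERIV_imp_deriv)
qed

lemma has_real_derivative_potential_smooth4:
  assumes U: "open U" and f: "smooth4 U f" and g: "smooth4 U g" and xy: "(x, y) \<in> U"
  shows "((\<lambda>s. potential (f s y) (g s y) u v) has_real_derivative
      oint 0 u (\<lambda>\<nu>. d1 f x y \<nu> v) + oint 0 v (\<lambda>\<sigma>. d1 g x y 0 \<sigma>)) (at x)"
    and "((\<lambda>s. potential (f x s) (g x s) u v) has_real_derivative
      oint 0 u (\<lambda>\<nu>. d2 f x y \<nu> v) + oint 0 v (\<lambda>\<sigma>. d2 g x y 0 \<sigma>)) (at y)"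
  using has_real_derivative_oint_smooth4[OF U f xy continuous_on_id continuous_on_const[of UNIV v], where b=u]
    has_real_derivative_oint_smooth4[OF U g xy continuous_on_const[of UNIV 0] continuous_on_id, where b=v]
  unfolding potential_def by (auto intro!: DERIV_add)

lemma kappa_curl:
  assumes U: "open U" and lv: "helmholtz U Ax Ay Bxx Bxy Byy" and xy: "(x, y) \<in> U"
  shows "d1 (kappa_y Bxy Byy) x y u v - d2 (kappa_x Bxx Bxy) x y u v
    = Dfun Ax Ay x y u v / 2 - omega_coef Ax Ay x y"
proof -
  note sm = helmholtzD(1-5)[OF lv] and dd = smooth4_d[OF U]
  have kappa_y_x: "d1 (kappa_y Bxy Byy) x y u v =
      - (oint 0 u (\<lambda>\<nu>. d1 Bxy x y \<nu> v) + oint 0 v (\<lambda>\<sigma>. d1 Byy x y 0 \<sigma>))"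
    using DERIV_imp_deriv[OF DERIV_minus[OF has_real_derivative_potential_smooth4(1)[OF U sm(4,5) xy]]]
    by (simp add: d1_def kappa_y_eq_potential)
  have kappa_x_y: "d2 (kappa_x Bxx Bxy) x y u v =
      - (oint 0 u (\<lambda>\<nu>. d2 Bxx x y \<nu> v) + oint 0 v (\<lambda>\<sigma>. d2 Bxy x y 0 \<sigma>))"
    using DERIV_imp_deriv[OF DERIV_minus[OF has_real_derivative_potential_smooth4(2)[OF U sm(3,4) xy]]]
    by (simp add: d2_def kappa_x_eq_potential)
  have cont: "continuous_on T (\<lambda>t. h x y (X t) (Y t))"
    if "smooth4 U h" "continuous_on T X" "continuous_on T Y" for h and T :: "real set" and X Y
    using that xy by (intro continuous_on_smooth4_compose[OF that(1)] continuous_intros) auto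
  have "oint 0 u (\<lambda>\<nu>. d2 Bxx x y \<nu> v) - oint 0 u (\<lambda>\<nu>. d1 Bxy x y \<nu> v)
      = oint 0 u (\<lambda>\<nu>. d2 Bxx x y \<nu> v - d1 Bxy x y \<nu> v)"
    by (intro oint_diff[symmetric] cont[OF dd(2)[OF sm(3)] continuous_on_id continuous_on_const]
        cont[OF dd(1)[OF sm(4)] continuous_on_id continuous_on_const])
  also have "\<dots> = Dfun Ax Ay x y u v / 2 - Dfun Ax Ay x y 0 v / 2"
  proof (rule oint_fundamental_theorem)
    fix t
    show "((\<lambda>s. Dfun Ax Ay x y s v / 2) has_real_derivative d2 Bxx x y t v - d1 Bxy x y t v)
        (at t within {min 0 u..max 0 u})"
      using half_Dfun_has_real_derivative_u[OF U lv xy, where u=t and v=v]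
      by (rule has_field_derivative_at_within)
  qed
  finally have int_u: "oint 0 u (\<lambda>\<nu>. d2 Bxx x y \<nu> v) - oint 0 u (\<lambda>\<nu>. d1 Bxy x y \<nu> v)
      = Dfun Ax Ay x y u v / 2 - Dfun Ax Ay x y 0 v / 2" .
  have "oint 0 v (\<lambda>\<sigma>. d2 Bxy x y 0 \<sigma>) - oint 0 v (\<lambda>\<sigma>. d1 Byy x y 0 \<sigma>)
      = oint 0 v (\<lambda>\<sigma>. d2 Bxy x y 0 \<sigma> - d1 Byy x y 0 \<sigma>)"
    by (intro oint_diff[symmetric] cont[OF dd(2)[OF sm(4)] continuous_on_const continuous_on_id]
        cont[OF dd(1)[OF sm(5)] continuous_on_const continuous_on_id])
  also have "\<dots> = Dfun Ax Ay x y 0 v / 2 - Dfun Ax Ay x y 0 0 / 2"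
  proof (rule oint_fundamental_theorem)
    fix t
    show "((\<lambda>s. Dfun Ax Ay x y 0 s / 2) has_real_derivative d2 Bxy x y 0 t - d1 Byy x y 0 t)
        (at t within {min 0 v..max 0 v})"
      using half_Dfun_has_real_derivative_v[OF U lv xy, where u=0 and v=t]
      by (rule has_field_derivative_at_within)
  qed
  finally have int_v: "oint 0 v (\<lambda>\<sigma>. d2 Bxy x y 0 \<sigma>) - oint 0 v (\<lambda>\<sigma>. d1 Byy x y 0 \<sigma>)
      = Dfun Ax Ay x y 0 v / 2 - Dfun Ax Ay x y 0 0 / 2" .
  have "d1 (kappa_y Bxy Byy) x y u v - d2 (kappa_x Bxx Bxy) x y u v =
      (oint 0 u (\<lambda>\<nu>. d2 Bxx x y \<nu> v) - oint 0 u (\<lambda>\<nu>. d1 Bxy x y \<nu> v))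
      + (oint 0 v (\<lambda>\<sigma>. d2 Bxy x y 0 \<sigma>) - oint 0 v (\<lambda>\<sigma>. d1 Byy x y 0 \<sigma>))"
    unfolding kappa_y_x kappa_x_y by (simp only: algebra_simps)
  also have "\<dots> = Dfun Ax Ay x y u v / 2 - omega_coef Ax Ay x y"
    unfolding int_u int_v omega_coef_def by simp
  finally show ?thesis .
qed

section \<open>Change of chart\<close>

lemma eps_y_eq_eps_x: "eps_y = eps_x"
  by (simp add: fun_eq_iff eps_x_def eps_y_def)

text \<open>
  At zero velocity the accelerations induced by a chart change are quadratic in the velocity
  (see \<open>acc\<close>), so they do not contribute to first order.
\<close>

lemma eps_x_has_real_derivative_zero_velocity:
  assumes "smooth4 V A" "smooth4 V B1" "smooth4 V B2" "(p, q) \<in> V"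
  shows "((\<lambda>s. eps_x A B1 B2 p q (\<alpha> * s) (\<beta> * s) (k1 * s * s) (k2 * s * s)) has_real_derivative
      \<alpha> * d3 A p q 0 0 + \<beta> * d4 A p q 0 0) (at 0)"
proof -
  have quadratic: "((\<lambda>s. k * s * s) has_real_derivative 0) (at 0)" for k :: real
    using DERIV_mult'[OF DERIV_cmult[OF DERIV_ident, of k] DERIV_ident, of 0] by simp
  show ?thesis
    unfolding eps_x_def
    using DERIV_add[OF DERIV_add[OF smooth4_has_real_derivative_velocity_line[OF assms(1,4)]
          DERIV_mult'[OF smooth4_has_real_derivative_velocity_line[OF assms(2,4)] quadratic]]
        DERIV_mult'[OF smooth4_has_real_derivative_velocity_line[OF assms(3,4)] quadratic]]
    by simp
qed

text \<open>
  Of the chart change only openness and \<open>U \<mapsto> V\<close> are needed: its first and second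
  derivatives enter the transformation law of \<open>\<epsilon>\<close> as pointwise coefficients.
\<close>

locale chart_transition =
  fixes U V :: "(real \<times> real) set"
    and p1 p2 :: "real \<Rightarrow> real \<Rightarrow> real"
    and Ax Ay Bxx Bxy Byy Ax' Ay' Bxx' Bxy' Byy' :: "real \<Rightarrow> real \<Rightarrow> real \<Rightarrow> real \<Rightarrow> real"
  assumes open_U: "open U" and open_V: "open V"
    and maps_to: "\<And>x y. (x, y) \<in> U \<Longrightarrow> (p1 x y, p2 x y) \<in> V"
    and lv: "helmholtz U Ax Ay Bxx Bxy Byy" and lv': "helmholtz V Ax' Ay' Bxx' Bxy' Byy'"
    and eps_transf: "\<And>x y u v a b. (x, y) \<in> U \<Longrightarrow>
        eps_x Ax Bxx Bxy x y u v a b =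
          eps_x Ax' Bxx' Bxy' (p1 x y) (p2 x y) (vel p1 x y u v) (vel p2 x y u v)
                (acc p1 x y u v a b) (acc p2 x y u v a b) * px p1 x y
        + eps_y Ay' Bxy' Byy' (p1 x y) (p2 x y) (vel p1 x y u v) (vel p2 x y u v)
                (acc p1 x y u v a b) (acc p2 x y u v a b) * px p2 x y
      \<and> eps_y Ay Bxy Byy x y u v a b =
          eps_x Ax' Bxx' Bxy' (p1 x y) (p2 x y) (vel p1 x y u v) (vel p2 x y u v)
                (acc p1 x y u v a b) (acc p2 x y u v a b) * py p1 x y
        + eps_y Ay' Bxy' Byy' (p1 x y) (p2 x y) (vel p1 x y u v) (vel p2 x y u v)
                (acc p1 x y u v a b) (acc p2 x y u v a b) * py p2 x y"
begin

abbreviation tangent_pullback ::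
  "(real \<Rightarrow> real \<Rightarrow> real \<Rightarrow> real \<Rightarrow> real) \<Rightarrow> real \<Rightarrow> real \<Rightarrow> real \<Rightarrow> real \<Rightarrow> real" where
  "tangent_pullback f x y u v \<equiv> f (p1 x y) (p2 x y) (vel p1 x y u v) (vel p2 x y u v)"

lemma omega_coef_transform:
  assumes xy: "(x, y) \<in> U"
  shows "omega_coef Ax Ay x y =
    omega_coef Ax' Ay' (p1 x y) (p2 x y) * (px p1 x y * py p2 x y - py p1 x y * px p2 x y)"
proof -
  let ?p = "p1 x y" and ?q = "p2 x y"
  note sm' = helmholtzD(1-5)[OF lv'] and PV = maps_to[OF xy]
  have Ax_line: "(\<lambda>s. Ax x y 0 s) = (\<lambda>s.
      eps_x Ax' Bxx' Bxy' ?p ?q (py p1 x y * s) (py p2 x y * s) (py (py p1) x y * s * s) (py (py p2) x y * s * s) * px p1 x y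
    + eps_x Ay' Bxy' Byy' ?p ?q (py p1 x y * s) (py p2 x y * s) (py (py p1) x y * s * s) (py (py p2) x y * s * s) * px p2 x y)"
    using eps_transf[OF xy, of 0 _ 0 0] by (simp add: fun_eq_iff eps_y_eq_eps_x vel_def acc_def eps_x_def mult.assoc)
  have d4_Ax: "d4 Ax x y 0 0 =
      (py p1 x y * d3 Ax' ?p ?q 0 0 + py p2 x y * d4 Ax' ?p ?q 0 0) * px p1 x y
    + (py p1 x y * d3 Ay' ?p ?q 0 0 + py p2 x y * d4 Ay' ?p ?q 0 0) * px p2 x y"
    unfolding d4_def[of Ax] Ax_line
    by (intro DERIV_imp_deriv DERIV_add DERIV_cmult_right
        eps_x_has_real_derivative_zero_velocity[OF sm'(1,3,4) PV]
        eps_x_has_real_derivative_zero_velocity[OF sm'(2,4,5) PV])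
  have Ay_line: "(\<lambda>s. Ay x y s 0) = (\<lambda>s.
      eps_x Ax' Bxx' Bxy' ?p ?q (px p1 x y * s) (px p2 x y * s) (px (px p1) x y * s * s) (px (px p2) x y * s * s) * py p1 x y
    + eps_x Ay' Bxy' Byy' ?p ?q (px p1 x y * s) (px p2 x y * s) (px (px p1) x y * s * s) (px (px p2) x y * s * s) * py p2 x y)"
    using eps_transf[OF xy, of _ 0 0 0] by (simp add: fun_eq_iff eps_y_eq_eps_x vel_def acc_def eps_x_def mult.assoc)
  have d3_Ay: "d3 Ay x y 0 0 =
      (px p1 x y * d3 Ax' ?p ?q 0 0 + px p2 x y * d4 Ax' ?p ?q 0 0) * py p1 x y
    + (px p1 x y * d3 Ay' ?p ?q 0 0 + px p2 x y * d4 Ay' ?p ?q 0 0) * py p2 x y"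
    unfolding d3_def[of Ay] Ay_line
    by (intro DERIV_imp_deriv DERIV_add DERIV_cmult_right
        eps_x_has_real_derivative_zero_velocity[OF sm'(1,3,4) PV]
        eps_x_has_real_derivative_zero_velocity[OF sm'(2,4,5) PV])
  show ?thesis
    by (simp add: omega_coef_def Dfun_def d4_Ax d3_Ay algebra_simps)
qed

lemma B_transform:
  assumes "(x, y) \<in> U"
  shows "Bxx x y u v =
      px p1 x y * (px p1 x y * tangent_pullback Bxx' x y u v + px p2 x y * tangent_pullback Bxy' x y u v)
    + px p2 x y * (px p1 x y * tangent_pullback Bxy' x y u v + px p2 x y * tangent_pullback Byy' x y u v)"
    and "Bxy x y u v =
      px p1 x y * (py p1 x y * tangent_pullback Bxx' x y u v + py p2 x y * tangent_pullback Bxy' x y u v)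
    + px p2 x y * (py p1 x y * tangent_pullback Bxy' x y u v + py p2 x y * tangent_pullback Byy' x y u v)"
    and "Bxy x y u v =
      py p1 x y * (px p1 x y * tangent_pullback Bxx' x y u v + px p2 x y * tangent_pullback Bxy' x y u v)
    + py p2 x y * (px p1 x y * tangent_pullback Bxy' x y u v + px p2 x y * tangent_pullback Byy' x y u v)"
    and "Byy x y u v =
      py p1 x y * (py p1 x y * tangent_pullback Bxx' x y u v + py p2 x y * tangent_pullback Bxy' x y u v)
    + py p2 x y * (py p1 x y * tangent_pullback Bxy' x y u v + py p2 x y * tangent_pullback Byy' x y u v)"
  \<comment> \<open>compare the coefficients of the accelerations \<open>a\<close> and \<open>b\<close>\<close>
  using eps_transf[OF assms, of u v 1 0] eps_transf[OF assms, of u v 0 1] eps_transf[OF assms, of u v 0 0]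
  unfolding eps_x_def eps_y_def acc_def by (simp_all add: algebra_simps)

lemma kappa_transform:
  assumes xy: "(x, y) \<in> U"
  shows "kappa_x Bxx Bxy x y u v =
      kappa_x Bxx' Bxy' (p1 x y) (p2 x y) (vel p1 x y u v) (vel p2 x y u v) * px p1 x y
    + kappa_y Bxy' Byy' (p1 x y) (p2 x y) (vel p1 x y u v) (vel p2 x y u v) * px p2 x y"
    and "kappa_y Bxy Byy x y u v =
      kappa_x Bxx' Bxy' (p1 x y) (p2 x y) (vel p1 x y u v) (vel p2 x y u v) * py p1 x y
    + kappa_y Bxy' Byy' (p1 x y) (p2 x y) (vel p1 x y u v) (vel p2 x y u v) * py p2 x y"
proof -
  note closed = helmholtz_closed_fields[OF open_U lv xy]
    and closed' = helmholtz_closed_fields[OF open_V lv' maps_to[OF xy]]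
  note B = B_transform[OF xy, unfolded vel_def]
  show "kappa_x Bxx Bxy x y u v =
      kappa_x Bxx' Bxy' (p1 x y) (p2 x y) (vel p1 x y u v) (vel p2 x y u v) * px p1 x y
    + kappa_y Bxy' Byy' (p1 x y) (p2 x y) (vel p1 x y u v) (vel p2 x y u v) * px p2 x y"
    using potential_linear_pullback[OF closed(1) closed' B(1,2), of u v]
    by (simp add: kappa_x_eq_potential kappa_y_eq_potential vel_def algebra_simps)
  show "kappa_y Bxy Byy x y u v =
      kappa_x Bxx' Bxy' (p1 x y) (p2 x y) (vel p1 x y u v) (vel p2 x y u v) * py p1 x y
    + kappa_y Bxy' Byy' (p1 x y) (p2 x y) (vel p1 x y u v) (vel p2 x y u v) * py p2 x y"
    using potential_linear_pullback[OF closed(2) closed' B(3,4), of u v]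
    by (simp add: kappa_x_eq_potential kappa_y_eq_potential vel_def algebra_simps)
qed

end

theorem theorem3p4:
  fixes U V :: "(real \<times> real) set"
    and p1 p2 q1 q2 :: "real \<Rightarrow> real \<Rightarrow> real"
    and Ax Ay Bxx Bxy Byy Ax' Ay' Bxx' Bxy' Byy' :: "real \<Rightarrow> real \<Rightarrow> real \<Rightarrow> real \<Rightarrow> real"
  assumes chart_change: "diffeo2 U V p1 p2 q1 q2"
    and lv: "helmholtz U Ax Ay Bxx Bxy Byy"
    and lv': "helmholtz V Ax' Ay' Bxx' Bxy' Byy'"
    and eps_transf: "\<And>x y u v a b. (x, y) \<in> U \<Longrightarrow>
        eps_x Ax Bxx Bxy x y u v a b =
          eps_x Ax' Bxx' Bxy' (p1 x y) (p2 x y) (vel p1 x y u v) (vel p2 x y u v)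
                (acc p1 x y u v a b) (acc p2 x y u v a b) * px p1 x y
        + eps_y Ay' Bxy' Byy' (p1 x y) (p2 x y) (vel p1 x y u v) (vel p2 x y u v)
                (acc p1 x y u v a b) (acc p2 x y u v a b) * px p2 x y
      \<and> eps_y Ay Bxy Byy x y u v a b =
          eps_x Ax' Bxx' Bxy' (p1 x y) (p2 x y) (vel p1 x y u v) (vel p2 x y u v)
                (acc p1 x y u v a b) (acc p2 x y u v a b) * py p1 x y
        + eps_y Ay' Bxy' Byy' (p1 x y) (p2 x y) (vel p1 x y u v) (vel p2 x y u v)
                (acc p1 x y u v a b) (acc p2 x y u v a b) * py p2 x y"
  shows
    "(\<forall>x y. (x, y) \<in> U \<longrightarrow>
        omega_coef Ax Ay x y =
          omega_coef Ax' Ay' (p1 x y) (p2 x y) * (px p1 x y * py p2 x y - py p1 x y * px p2 x y))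
   \<and> (\<forall>x y u v. (x, y) \<in> U \<longrightarrow>
        kappa_x Bxx Bxy x y u v =
          kappa_x Bxx' Bxy' (p1 x y) (p2 x y) (vel p1 x y u v) (vel p2 x y u v) * px p1 x y
        + kappa_y Bxy' Byy' (p1 x y) (p2 x y) (vel p1 x y u v) (vel p2 x y u v) * px p2 x y
      \<and> kappa_y Bxy Byy x y u v =
          kappa_x Bxx' Bxy' (p1 x y) (p2 x y) (vel p1 x y u v) (vel p2 x y u v) * py p1 x y
        + kappa_y Bxy' Byy' (p1 x y) (p2 x y) (vel p1 x y u v) (vel p2 x y u v) * py p2 x y)
   \<and> (\<forall>x y u v. (x, y) \<in> U \<longrightarrow>
        d1 (kappa_y Bxy Byy) x y u v - d2 (kappa_x Bxx Bxy) x y u v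
          = Dfun Ax Ay x y u v / 2 - omega_coef Ax Ay x y
      \<and> - d3 (kappa_x Bxx Bxy) x y u v = Bxx x y u v
      \<and> - d4 (kappa_x Bxx Bxy) x y u v = Bxy x y u v
      \<and> - d3 (kappa_y Bxy Byy) x y u v = Bxy x y u v
      \<and> - d4 (kappa_y Bxy Byy) x y u v = Byy x y u v)"
proof -
  interpret chart_transition U V p1 p2 Ax Ay Bxx Bxy Byy Ax' Ay' Bxx' Bxy' Byy'
  proof
    show "open U" "open V" "\<And>x y. (x, y) \<in> U \<Longrightarrow> (p1 x y, p2 x y) \<in> V"
      using chart_change by (auto simp: diffeo2_def)
  qed (fact lv lv' eps_transf)+
  show ?thesis
    by (intro conjI allI impI omega_coef_transform kappa_transform
        kappa_curl[OF open_U lv] kappa_vertical_partials[OF open_U lv])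
qed

end
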